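(* For every $\lambda$ and every integer $k\ge1$, $$\Big\{\operatorname{tr}\big((\lambda-L)^k\big),\ \mathcal{E}(\lambda)-\mathcal{G}(\lambda)\Big\}_0=0,$$ where $\mathcal{G}(\lambda)=\operatorname{tr}(X(\lambda-L)^\vee)$ and $\mathcal{E}(\lambda)=\mathbf{x}^T(\lambda-L)^\vee\mathbf{e}$. Consequently $\{I_k,\mathcal{E}(\lambda)-\mathcal{G}(\lambda)\}_0=0$ for all $k\ge1$.
   Context: Fix $n\ge1$. On the open subset of $\mathbb{R}^{2n}$ with coordinates $(x_1,\dots,x_n,p_1,\dots,p_n)$ where the $x_i$ are pairwise distinct, let $L$ be the $n\times n$ matrix with $L_{ij}=p_i\delta_{ij}+(1-\delta_{ij})/(x_i-x_j)$ and $X=\mathrm{diag}(x_1,\dots,x_n)$. $A^\vee$ denotes the adjugate of a square matrix $A$. $\mathbf{e}=(1,\dots,1)^T$, $\mathbf{x}=(x_1,\dots,x_n)^T$, $I_k=\frac1k\operatorname{tr}L^k$. $\{\cdot,\cdot\}_0$ is the canonical bracket with $\{p_i,x_j\}_0=\delta_{ij}$, $\{x_i,x_j\}_0=\{p_i,p_j\}_0=0$. *)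

theory Defs
  imports "HOL-Analysis.Derivative" "Jordan_Normal_Form.Determinant"
begin

(* Phase-space points are pairs (x, p) of functions nat => real; only the
   coordinates 0..n-1 are relevant. *)

definition mtrace :: "real mat \<Rightarrow> real" where
  "mtrace A = (\<Sum>i<dim_row A. A $$ (i, i))"

definition Lmat :: "nat \<Rightarrow> (nat \<Rightarrow> real) \<Rightarrow> (nat \<Rightarrow> real) \<Rightarrow> real mat" where
  "Lmat n x p = mat n n (\<lambda>(i, j). if i = j then p i else 1 / (x i - x j))"

definition Xmat :: "nat \<Rightarrow> (nat \<Rightarrow> real) \<Rightarrow> real mat" where
  "Xmat n x = mat n n (\<lambda>(i, j). if i = j then x i else 0)"

definition shiftL :: "nat \<Rightarrow> real \<Rightarrow> (nat \<Rightarrow> real) \<Rightarrow> (nat \<Rightarrow> real) \<Rightarrow> real mat" where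
  "shiftL n lam x p = lam \<cdot>\<^sub>m 1\<^sub>m n - Lmat n x p"

definition calG :: "nat \<Rightarrow> real \<Rightarrow> (nat \<Rightarrow> real) \<Rightarrow> (nat \<Rightarrow> real) \<Rightarrow> real" where
  "calG n lam x p = mtrace (Xmat n x * adj_mat (shiftL n lam x p))"

definition calE :: "nat \<Rightarrow> real \<Rightarrow> (nat \<Rightarrow> real) \<Rightarrow> (nat \<Rightarrow> real) \<Rightarrow> real" where
  "calE n lam x p = vec n x \<bullet> (adj_mat (shiftL n lam x p) *\<^sub>v vec n (\<lambda>_. 1))"

definition Ik :: "nat \<Rightarrow> nat \<Rightarrow> (nat \<Rightarrow> real) \<Rightarrow> (nat \<Rightarrow> real) \<Rightarrow> real" where
  "Ik n k x p = (1 / real k) * mtrace (Lmat n x p ^\<^sub>m k)"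

definition pdx :: "((nat \<Rightarrow> real) \<Rightarrow> (nat \<Rightarrow> real) \<Rightarrow> real) \<Rightarrow> (nat \<Rightarrow> real) \<Rightarrow> (nat \<Rightarrow> real) \<Rightarrow> nat \<Rightarrow> real" where
  "pdx f x p i = deriv (\<lambda>t. f (x(i := t)) p) (x i)"

definition pdp :: "((nat \<Rightarrow> real) \<Rightarrow> (nat \<Rightarrow> real) \<Rightarrow> real) \<Rightarrow> (nat \<Rightarrow> real) \<Rightarrow> (nat \<Rightarrow> real) \<Rightarrow> nat \<Rightarrow> real" where
  "pdp f x p i = deriv (\<lambda>t. f x (p(i := t))) (p i)"

(* canonical bracket with {p_i, x_j}_0 = delta_ij *)
definition pbracket :: "nat \<Rightarrow> ((nat \<Rightarrow> real) \<Rightarrow> (nat \<Rightarrow> real) \<Rightarrow> real) \<Rightarrow> ((nat \<Rightarrow> real) \<Rightarrow> (nat \<Rightarrow> real) \<Rightarrow> real) \<Rightarrow> (nat \<Rightarrow> real) \<Rightarrow> (nat \<Rightarrow> real) \<Rightarrow> real" where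
  "pbracket n f g x p = (\<Sum>i<n. pdp f x p i * pdx g x p i - pdx f x p i * pdp g x p i)"

end

(*
  Write S = lambda - L, A = adj S, X = diag x and J = e e^T - 1, so that E - G = tr (X A J).
  Both tr S^k and I_k have gradients of the form dF/dp_m = c B_mm, dF/dx_m = c tr (B dL/dx_m),
  with B a power of S or of L and hence commuting with S. Since the derivative adj' of the
  adjugate is linear in the direction, the bracket with E - G collapses to
  c (tr (D A J) + tr (X adj'(S)[M,S] J)), where D is the diagonal part of B and
  M_ab = B_ab/(x_a - x_b) - delta_ab sum_l B_al/(x_a - x_l) is the matrix for which [M,S] is
  exactly the combination of partial derivatives of S that occurs; this Lax-type identity rests
  on the three-term identity for 1/(x_a - x_b). The adjugate is equivariant under conjugation,
  so adj'(S)[M,S] = [M,A] (for invertible S from S A = det S, in general by density). Finally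
  D = [M,X] + B, J = [S,X] and J M = M J, and cyclicity of the trace makes
  tr (D A J) + tr (X [M,A] J) vanish.
*)

theory Submission
  imports Defs "Jordan_Normal_Form.Char_Poly"
begin

lemma index_mult_mat_sum:
  assumes "A \<in> carrier_mat n n" "B \<in> carrier_mat n n" "i < n" "j < n"
  shows "(A * B) $$ (i,j) = (\<Sum>l<n. A $$ (i,l) * B $$ (l,j))"
  using assms by (auto simp: scalar_prod_def atLeast0LessThan intro: sum.cong)

lemma mtrace_eq_sum: "A \<in> carrier_mat n n \<Longrightarrow> mtrace A = (\<Sum>i<n. A $$ (i,i))"
  by (simp add: mtrace_def)

lemma mtrace_mult_eq_sum:
  assumes "A \<in> carrier_mat n n" "B \<in> carrier_mat n n"
  shows "mtrace (A * B) = (\<Sum>i<n. \<Sum>l<n. A $$ (i,l) * B $$ (l,i))"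
proof -
  have "A * B \<in> carrier_mat n n" using assms by simp
  then show ?thesis
    by (simp only: mtrace_eq_sum) (intro sum.cong refl index_mult_mat_sum[OF assms]; simp)
qed

lemma mtrace_mult_comm:
  assumes "A \<in> carrier_mat n n" "B \<in> carrier_mat n n"
  shows "mtrace (A * B) = mtrace (B * A)"
  using assms by (simp add: mtrace_mult_eq_sum[of _ n] mult.commute) (rule sum.swap)

lemma mtrace_add: "A \<in> carrier_mat n n \<Longrightarrow> B \<in> carrier_mat n n \<Longrightarrow> mtrace (A + B) = mtrace A + mtrace B"
  by (auto simp: mtrace_def sum.distrib[symmetric] intro!: sum.cong)

lemma mtrace_minus: "A \<in> carrier_mat n n \<Longrightarrow> B \<in> carrier_mat n n \<Longrightarrow> mtrace (A - B) = mtrace A - mtrace B"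
  by (auto simp: mtrace_def sum_subtractf[symmetric] intro!: sum.cong)

lemma mtrace_mult_uminus_right:
  assumes "A \<in> carrier_mat n n" "B \<in> carrier_mat n n"
  shows "mtrace (A * - B) = - mtrace (A * B)"
  using assms by (auto simp: mtrace_def sum_negf[symmetric] intro!: sum.cong)

lemma mtrace_mult_lincomb:
  assumes A: "A \<in> carrier_mat n n" and Z: "Z \<in> carrier_mat n n"
    and Zs: "\<And>k. Zs k \<in> carrier_mat n n"
    and lin: "\<And>a b. a < n \<Longrightarrow> b < n \<Longrightarrow> Z $$ (a,b) = (\<Sum>k\<in>K. c k * Zs k $$ (a,b))"
  shows "mtrace (A * Z) = (\<Sum>k\<in>K. c k * mtrace (A * Zs k))"
proof -
  have "mtrace (A * Z) = (\<Sum>i<n. \<Sum>l<n. \<Sum>k\<in>K. c k * (A $$ (i,l) * Zs k $$ (l,i)))"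
    using A Z by (simp add: mtrace_mult_eq_sum lin sum_distrib_left mult_ac)
  also have "\<dots> = (\<Sum>i<n. \<Sum>k\<in>K. \<Sum>l<n. c k * (A $$ (i,l) * Zs k $$ (l,i)))"
    by (rule sum.cong[OF refl], rule sum.swap)
  also have "\<dots> = (\<Sum>k\<in>K. c k * mtrace (A * Zs k))"
    using A Zs by (subst sum.swap) (simp add: mtrace_mult_eq_sum sum_distrib_left)
  finally show ?thesis .
qed

lemma pow_mat_commute:
  assumes "Y \<in> carrier_mat n n" "W \<in> carrier_mat n n" "W * Y = Y * W"
  shows "W * Y ^\<^sub>m k = Y ^\<^sub>m k * W"
proof (induction k)
  case (Suc k)
  have "W * Y ^\<^sub>m Suc k = (W * Y ^\<^sub>m k) * Y"
    using assms by (simp add: assoc_mult_mat[symmetric, of W n n _ n _ n])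
  also have "\<dots> = Y ^\<^sub>m k * (Y * W)" using assms Suc by (simp add: assoc_mult_mat[of _ n n _ n _ n])
  also have "\<dots> = Y ^\<^sub>m Suc k * W" using assms by (simp add: assoc_mult_mat[of _ n n _ n _ n])
  finally show ?case .
qed (use assms in simp)

section \<open>Entrywise derivatives of matrix-valued functions\<close>

definition has_mat_deriv :: "nat \<Rightarrow> (real \<Rightarrow> real mat) \<Rightarrow> real mat \<Rightarrow> real \<Rightarrow> bool" where
  "has_mat_deriv n Y Y' t0 \<longleftrightarrow> (\<forall>t. Y t \<in> carrier_mat n n) \<and> Y' \<in> carrier_mat n n \<and>
     (\<forall>i<n. \<forall>j<n. ((\<lambda>t. Y t $$ (i,j)) has_real_derivative Y' $$ (i,j)) (at t0))"

lemma has_mat_derivD: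
  assumes "has_mat_deriv n Y Y' t0"
  shows "Y t \<in> carrier_mat n n" "Y' \<in> carrier_mat n n"
    and "i < n \<Longrightarrow> j < n \<Longrightarrow> ((\<lambda>t. Y t $$ (i,j)) has_real_derivative Y' $$ (i,j)) (at t0)"
  using assms by (auto simp: has_mat_deriv_def)

lemma has_mat_deriv_const: "A \<in> carrier_mat n n \<Longrightarrow> has_mat_deriv n (\<lambda>t. A) (0\<^sub>m n n) t0"
  by (auto simp: has_mat_deriv_def)

lemma has_mat_deriv_line:
  assumes "Y \<in> carrier_mat n n" "Z \<in> carrier_mat n n"
  shows "has_mat_deriv n (\<lambda>t. Y + t \<cdot>\<^sub>m Z) Z t0"
  using assms by (auto simp: has_mat_deriv_def intro!: derivative_eq_intros)

lemma has_mat_deriv_shift: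
  assumes Y: "has_mat_deriv n Y Y' t0"
  shows "has_mat_deriv n (\<lambda>t. lam \<cdot>\<^sub>m 1\<^sub>m n - Y t) (- Y') t0"
  unfolding has_mat_deriv_def
proof (intro conjI allI impI)
  note c = has_mat_derivD(1,2)[OF Y]
  fix i j assume ij: "i < n" "j < n"
  have "(\<lambda>t. (lam \<cdot>\<^sub>m 1\<^sub>m n - Y t) $$ (i,j)) = (\<lambda>t. (if i = j then lam else 0) - Y t $$ (i,j))"
    using ij by (auto simp: carrier_matD[OF c(1)])
  then show "((\<lambda>t. (lam \<cdot>\<^sub>m 1\<^sub>m n - Y t) $$ (i,j)) has_real_derivative (- Y') $$ (i,j)) (at t0)"
    using c ij by (auto intro!: derivative_eq_intros has_mat_derivD(3)[OF Y])
qed (use has_mat_derivD(1,2)[OF Y] in \<open>auto intro!: minus_carrier_mat\<close>)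

lemma has_mat_deriv_mult:
  assumes Y: "has_mat_deriv n Y Y' t0" and W: "has_mat_deriv n W W' t0"
  shows "has_mat_deriv n (\<lambda>t. Y t * W t) (Y' * W t0 + Y t0 * W') t0"
  unfolding has_mat_deriv_def
proof (intro conjI allI impI)
  note c = has_mat_derivD(1,2)[OF Y] has_mat_derivD(1,2)[OF W]
  fix i j assume ij: "i < n" "j < n"
  have "((\<lambda>t. \<Sum>l<n. Y t $$ (i,l) * W t $$ (l,j)) has_real_derivative
        (\<Sum>l<n. Y' $$ (i,l) * W t0 $$ (l,j) + Y t0 $$ (i,l) * W' $$ (l,j))) (at t0)"
    using ij by (auto intro!: DERIV_sum derivative_eq_intros has_mat_derivD(3)[OF Y] has_mat_derivD(3)[OF W])
  moreover have "(Y' * W t0 + Y t0 * W') $$ (i,j) =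
      (\<Sum>l<n. Y' $$ (i,l) * W t0 $$ (l,j) + Y t0 $$ (i,l) * W' $$ (l,j))"
    using c ij by (simp add: carrier_matD[OF c(1)] carrier_matD[OF c(3)] index_mult_mat_sum[of _ n] sum.distrib
        del: index_mult_mat(1))
  ultimately show "((\<lambda>t. (Y t * W t) $$ (i,j)) has_real_derivative (Y' * W t0 + Y t0 * W') $$ (i,j)) (at t0)"
    using c ij by (simp add: index_mult_mat_sum[of _ n] del: index_mult_mat(1))
qed (use has_mat_derivD(1,2)[OF Y] has_mat_derivD(1,2)[OF W] in \<open>auto intro!: mult_carrier_mat add_carrier_mat\<close>)

lemma has_mat_deriv_mtrace:
  assumes "has_mat_deriv n Y Y' t0"
  shows "((\<lambda>t. mtrace (Y t)) has_real_derivative mtrace Y') (at t0)"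
  using has_mat_derivD[OF assms] by (auto simp: mtrace_eq_sum[of _ n] intro!: DERIV_sum)

lemma isCont_has_mat_deriv:
  "has_mat_deriv n Y Y' t0 \<Longrightarrow> i < n \<Longrightarrow> j < n \<Longrightarrow> isCont (\<lambda>t. Y t $$ (i,j)) t0"
  by (rule DERIV_isCont, rule has_mat_derivD(3))

lemma has_mat_deriv_diff:
  assumes Y: "has_mat_deriv n Y Y' t0" and W: "has_mat_deriv n W W' t0"
  shows "has_mat_deriv n (\<lambda>t. Y t - W t) (Y' - W') t0"
  unfolding has_mat_deriv_def
proof (intro conjI allI impI)
  note c = has_mat_derivD(1,2)[OF Y] has_mat_derivD(1,2)[OF W]
  fix i j assume ij: "i < n" "j < n"
  then have "(\<lambda>t. (Y t - W t) $$ (i,j)) = (\<lambda>t. Y t $$ (i,j) - W t $$ (i,j))"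
    by (simp add: carrier_matD[OF c(3)])
  then show "((\<lambda>t. (Y t - W t) $$ (i,j)) has_real_derivative (Y' - W') $$ (i,j)) (at t0)"
    using c ij by (auto intro!: derivative_eq_intros has_mat_derivD(3)[OF Y] has_mat_derivD(3)[OF W])
qed (use has_mat_derivD(1,2)[OF Y] has_mat_derivD(1,2)[OF W] in \<open>auto intro!: minus_carrier_mat\<close>)

fun mat_pow_deriv :: "nat \<Rightarrow> real mat \<Rightarrow> real mat \<Rightarrow> nat \<Rightarrow> real mat" where
  "mat_pow_deriv n Y Y' 0 = 0\<^sub>m n n"
| "mat_pow_deriv n Y Y' (Suc k) = mat_pow_deriv n Y Y' k * Y + Y ^\<^sub>m k * Y'"

lemma mat_pow_deriv_carrier:
  "Y \<in> carrier_mat n n \<Longrightarrow> Y' \<in> carrier_mat n n \<Longrightarrow> mat_pow_deriv n Y Y' k \<in> carrier_mat n n"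
  by (induction k) auto

lemma has_mat_deriv_pow:
  assumes Y: "has_mat_deriv n Y Y' t0"
  shows "has_mat_deriv n (\<lambda>t. Y t ^\<^sub>m k) (mat_pow_deriv n (Y t0) Y' k) t0"
proof (induction k)
  case 0
  have "(\<lambda>t. Y t ^\<^sub>m 0) = (\<lambda>t. 1\<^sub>m n)" using carrier_matD(1)[OF has_mat_derivD(1)[OF Y]] by simp
  then show ?case using has_mat_deriv_const[of "1\<^sub>m n" n t0] by simp
next
  case (Suc k)
  from has_mat_deriv_mult[OF Suc Y] show ?case by simp
qed

text \<open>Each of the \<open>k\<close> terms \<open>Y\<^sup>i Y' Y\<^sup>j\<close> (\<open>i + j = k - 1\<close>) of the derivative of \<open>Y\<^sup>k\<close>
  has the same trace against \<open>W\<close>, by cyclicity and because \<open>W\<close> commutes with \<open>Y\<close>.\<close>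

lemma mtrace_mat_pow_deriv:
  assumes Y: "Y \<in> carrier_mat n n" and Y': "Y' \<in> carrier_mat n n"
  shows "W \<in> carrier_mat n n \<Longrightarrow> W * Y = Y * W \<Longrightarrow>
    mtrace (mat_pow_deriv n Y Y' k * W) = real k * mtrace (Y ^\<^sub>m (k - 1) * Y' * W)"
proof (induction k arbitrary: W)
  case 0 then show ?case by (simp add: mtrace_def)
next
  case (Suc k)
  note W = Suc.prems(1)
  have P: "mat_pow_deriv n Y Y' k \<in> carrier_mat n n" using mat_pow_deriv_carrier[OF Y Y'] .
  have YW: "Y * W \<in> carrier_mat n n" "(Y * W) * Y = Y * (Y * W)"
    using Suc.prems Y by (auto simp: assoc_mult_mat[of _ n n _ n _ n])
  have "(mat_pow_deriv n Y Y' k * Y + Y ^\<^sub>m k * Y') * W = mat_pow_deriv n Y Y' k * Y * W + Y ^\<^sub>m k * Y' * W"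
    by (rule add_mult_distrib_mat) (use P Y Y' W in auto)
  also have "mat_pow_deriv n Y Y' k * Y * W = mat_pow_deriv n Y Y' k * (Y * W)"
    by (rule assoc_mult_mat[OF P Y W])
  finally have eq: "mat_pow_deriv n Y Y' (Suc k) * W = mat_pow_deriv n Y Y' k * (Y * W) + Y ^\<^sub>m k * Y' * W"
    by simp
  have "mtrace (mat_pow_deriv n Y Y' (Suc k) * W) =
      mtrace (mat_pow_deriv n Y Y' k * (Y * W)) + mtrace (Y ^\<^sub>m k * Y' * W)"
    unfolding eq by (rule mtrace_add) (use P Y Y' W in auto)
  also have "\<dots> = real k * mtrace (Y ^\<^sub>m (k - 1) * Y' * (Y * W)) + mtrace (Y ^\<^sub>m k * Y' * W)"
    by (simp add: Suc.IH[OF YW])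
  also have "real k * mtrace (Y ^\<^sub>m (k - 1) * Y' * (Y * W)) = real k * mtrace (Y ^\<^sub>m k * Y' * W)"
  proof (cases k)
    case (Suc k')
    have "Y * W * Y ^\<^sub>m k' = W * Y * Y ^\<^sub>m k'"
      using Suc.prems(2) by simp
    also have "\<dots> = W * (Y * Y ^\<^sub>m k')"
      using Y W by (simp add: assoc_mult_mat[of _ n n _ n _ n])
    also have "Y * Y ^\<^sub>m k' = Y ^\<^sub>m k"
      using pow_mat_commute[OF Y Y refl, of k'] Suc by simp
    finally have "Y * W * Y ^\<^sub>m k' = W * Y ^\<^sub>m k" .
    moreover have "mtrace (Y ^\<^sub>m k' * Y' * (Y * W)) = mtrace (Y' * (Y * W * Y ^\<^sub>m k'))"
      using Y Y' W
      by (simp add: mtrace_mult_comm[of "Y ^\<^sub>m k'" n "Y' * (Y * W)"] assoc_mult_mat[of _ n n _ n _ n])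
    moreover have "mtrace (Y ^\<^sub>m k * Y' * W) = mtrace (Y' * (W * Y ^\<^sub>m k))"
      using Y Y' W
      by (simp add: mtrace_mult_comm[of "Y ^\<^sub>m k" n "Y' * W"] assoc_mult_mat[of _ n n _ n _ n])
    ultimately show ?thesis using Suc by simp
  qed simp
  finally show ?case by (simp add: algebra_simps)
qed

lemma has_real_derivative_mtrace_pow:
  assumes Y: "has_mat_deriv n Y Y' t0"
  shows "((\<lambda>t. mtrace (Y t ^\<^sub>m k)) has_real_derivative real k * mtrace (Y t0 ^\<^sub>m (k - 1) * Y')) (at t0)"
proof -
  note c = has_mat_derivD(1,2)[OF Y]
  have "mtrace (mat_pow_deriv n (Y t0) Y' k) = mtrace (mat_pow_deriv n (Y t0) Y' k * 1\<^sub>m n)"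
    by (simp add: right_mult_one_mat[OF mat_pow_deriv_carrier[OF c(1)[of t0] c(2)]])
  also have "\<dots> = real k * mtrace (Y t0 ^\<^sub>m (k - 1) * Y')"
    using c(1)[of t0] c(2) by (subst mtrace_mat_pow_deriv[OF c(1)[of t0] c(2)]) auto
  finally show ?thesis
    using has_mat_deriv_mtrace[OF has_mat_deriv_pow[OF Y, of k]] by simp
qed

section \<open>Derivatives of the determinant and the adjugate\<close>

lemma permutes_lessThan: fixes p :: "nat \<Rightarrow> nat" shows "p permutes {0..<n} \<Longrightarrow> i < n \<Longrightarrow> p i < n"
  using permutes_in_image[of p "{0..<n}" i] by auto

lemma det_replace_row:
  assumes Y: "Y \<in> carrier_mat n n" and l: "l < n"
  shows "det (mat n n (\<lambda>(a,b). if a = l then Z $$ (a,b) else Y $$ (a,b))) =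
    (\<Sum>j<n. Z $$ (l,j) * cofactor Y l j)"
    (is "det ?Yl = _")
proof -
  have "det ?Yl = (\<Sum>j<n. ?Yl $$ (l,j) * cofactor ?Yl l j)"
    by (rule laplace_expansion_row) (use l in auto)
  also have "\<dots> = (\<Sum>j<n. Z $$ (l,j) * cofactor Y l j)"
  proof (intro sum.cong refl)
    fix j assume j: "j \<in> {..<n}"
    have "mat_delete ?Yl l j = mat_delete Y l j"
      using Y by (intro eq_matI) (auto simp: mat_delete_def)
    then show "?Yl $$ (l,j) * cofactor ?Yl l j = Z $$ (l,j) * cofactor Y l j"
      using j l by (simp add: cofactor_def)
  qed
  finally show ?thesis .
qed

text \<open>Jacobi's formula: differentiating the Leibniz expansion gives a sum of determinants with
  one row replaced by the derivative, and Laplace expansion along that row turns this into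
  \<open>tr (adj Y * Y')\<close>.\<close>

lemma has_real_derivative_det:
  assumes Y: "has_mat_deriv n Y Y' t0"
  shows "((\<lambda>t. det (Y t)) has_real_derivative mtrace (adj_mat (Y t0) * Y')) (at t0)"
proof -
  note c = has_mat_derivD(1,2)[OF Y]
  let ?P = "{p. p permutes {0..<n}}"
  let ?Yl = "\<lambda>l. mat n n (\<lambda>(a,b). if a = l then Y' $$ (a,b) else Y t0 $$ (a,b))"
  have "((\<lambda>t. det (Y t)) has_real_derivative (\<Sum>p\<in>?P. signof p *
      (\<Sum>l\<in>{0..<n}. Y' $$ (l, p l) * (\<Prod>i\<in>{0..<n}-{l}. Y t0 $$ (i, p i))))) (at t0)"
    unfolding det_def'[OF c(1)]
    by (intro DERIV_sum DERIV_cmult has_field_derivative_prod)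
      (auto simp: permutes_lessThan intro: has_mat_derivD(3)[OF Y])
  also have "(\<Sum>p\<in>?P. signof p *
      (\<Sum>l\<in>{0..<n}. Y' $$ (l, p l) * (\<Prod>i\<in>{0..<n}-{l}. Y t0 $$ (i, p i)))) =
      (\<Sum>l\<in>{0..<n}. \<Sum>p\<in>?P. signof p * (\<Prod>i\<in>{0..<n}. ?Yl l $$ (i, p i)))"
    unfolding sum_distrib_left
  proof (subst sum.swap, intro sum.cong refl)
    fix l p assume l: "l \<in> {0..<n}" and p: "p \<in> ?P"
    have "(\<Prod>i\<in>{0..<n}. ?Yl l $$ (i, p i)) = ?Yl l $$ (l, p l) * (\<Prod>i\<in>{0..<n}-{l}. ?Yl l $$ (i, p i))"
      using l by (simp add: prod.remove)
    also have "\<dots> = Y' $$ (l, p l) * (\<Prod>i\<in>{0..<n}-{l}. Y t0 $$ (i, p i))"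
      using l p by (auto simp: permutes_lessThan intro!: prod.cong)
    finally show "signof p * (Y' $$ (l, p l) * (\<Prod>i\<in>{0..<n}-{l}. Y t0 $$ (i, p i))) =
        signof p * (\<Prod>i\<in>{0..<n}. ?Yl l $$ (i, p i))" by simp
  qed
  also have "\<dots> = (\<Sum>l\<in>{0..<n}. det (?Yl l))"
    by (intro sum.cong refl det_def'[symmetric]) auto
  also have "\<dots> = (\<Sum>l<n. \<Sum>j<n. Y' $$ (l,j) * cofactor (Y t0) l j)"
    by (simp add: det_replace_row[OF c(1)] atLeast0LessThan)
  also have "\<dots> = mtrace (adj_mat (Y t0) * Y')"
    unfolding mtrace_mult_eq_sum[OF adj_mat(1)[OF c(1)] c(2)]
    by (subst sum.swap) (auto simp: adj_mat_def carrier_matD[OF c(1)] mult.commute intro!: sum.cong)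
  finally show ?thesis .
qed

lemma mat_delete_index:
  assumes "A \<in> carrier_mat n n" "a < n - 1" "b < n - 1"
  shows "mat_delete A j i $$ (a,b) = A $$ (if a < j then a else Suc a, if b < i then b else Suc b)"
  using assms by (simp add: mat_delete_def)

lemma has_mat_deriv_delete:
  assumes Y: "has_mat_deriv n Y Y' t0"
  shows "has_mat_deriv (n - 1) (\<lambda>t. mat_delete (Y t) j i) (mat_delete Y' j i) t0"
  unfolding has_mat_deriv_def
proof (intro conjI allI impI)
  note c = has_mat_derivD(1,2)[OF Y]
  fix a b assume ab: "a < n - 1" "b < n - 1"
  then have "(if a < j then a else Suc a) < n" "(if b < i then b else Suc b) < n" by auto
  then show "((\<lambda>t. mat_delete (Y t) j i $$ (a,b)) has_real_derivative mat_delete Y' j i $$ (a,b)) (at t0)"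
    using ab by (simp add: mat_delete_index[OF c(1)] mat_delete_index[OF c(2)] has_mat_derivD(3)[OF Y])
qed (use mat_delete_carrier has_mat_derivD(1,2)[OF Y] in blast)+

text \<open>The derivative of \<open>adj\<close> at \<open>Y\<close> in direction \<open>Z\<close>: Jacobi's formula applied to every
  cofactor.\<close>

definition adj_deriv :: "nat \<Rightarrow> real mat \<Rightarrow> real mat \<Rightarrow> real mat" where
  "adj_deriv n Y Z =
     mat n n (\<lambda>(i,j). (-1)^(j+i) * mtrace (adj_mat (mat_delete Y j i) * mat_delete Z j i))"

lemma adj_deriv_carrier[simp]: "adj_deriv n Y Z \<in> carrier_mat n n"
  by (simp add: adj_deriv_def)

lemma has_mat_deriv_adj:
  assumes Y: "has_mat_deriv n Y Y' t0"
  shows "has_mat_deriv n (\<lambda>t. adj_mat (Y t)) (adj_deriv n (Y t0) Y') t0"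
  unfolding has_mat_deriv_def
proof (intro conjI allI impI)
  note c = has_mat_derivD(1)[OF Y]
  fix i j assume ij: "i < n" "j < n"
  have "(\<lambda>t. adj_mat (Y t) $$ (i,j)) = (\<lambda>t. (-1)^(j+i) * det (mat_delete (Y t) j i))"
    using ij by (simp add: adj_mat_def cofactor_def carrier_matD[OF c])
  then show "((\<lambda>t. adj_mat (Y t) $$ (i,j)) has_real_derivative adj_deriv n (Y t0) Y' $$ (i,j)) (at t0)"
    using ij by (simp add: adj_deriv_def DERIV_cmult has_real_derivative_det[OF has_mat_deriv_delete[OF Y]])
qed (use adj_mat(1) has_mat_derivD(1)[OF Y] in auto)

lemma adj_deriv_lincomb:
  assumes Y: "Y \<in> carrier_mat n n" and Z: "Z \<in> carrier_mat n n"
    and Zs: "\<And>k. Zs k \<in> carrier_mat n n"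
    and lin: "\<And>a b. a < n \<Longrightarrow> b < n \<Longrightarrow> Z $$ (a,b) = (\<Sum>k\<in>K. c k * Zs k $$ (a,b))"
    and ij: "i < n" "j < n"
  shows "adj_deriv n Y Z $$ (i,j) = (\<Sum>k\<in>K. c k * adj_deriv n Y (Zs k) $$ (i,j))"
proof -
  have "mtrace (adj_mat (mat_delete Y j i) * mat_delete Z j i) =
      (\<Sum>k\<in>K. c k * mtrace (adj_mat (mat_delete Y j i) * mat_delete (Zs k) j i))"
  proof (rule mtrace_mult_lincomb)
    fix a b assume "a < n - 1" "b < n - 1"
    then show "mat_delete Z j i $$ (a,b) = (\<Sum>k\<in>K. c k * mat_delete (Zs k) j i $$ (a,b))"
      by (simp add: mat_delete_index[OF Z] mat_delete_index[OF Zs] lin)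
  qed (use Y Z Zs mat_delete_carrier adj_mat(1) in blast)+
  then show ?thesis using ij by (simp add: adj_deriv_def sum_distrib_left mult_ac)
qed

lemma isCont_adj_deriv:
  assumes Y: "has_mat_deriv n Y Y' \<mu>0" and Z: "Z \<in> carrier_mat n n" and ij: "i < n" "j < n"
  shows "isCont (\<lambda>\<mu>. adj_deriv n (Y \<mu>) Z $$ (i,j)) \<mu>0"
proof -
  have A: "has_mat_deriv (n - 1) (\<lambda>\<mu>. adj_mat (mat_delete (Y \<mu>) j i)) (adj_deriv (n - 1) (mat_delete (Y \<mu>0) j i) (mat_delete Y' j i)) \<mu>0"
    by (rule has_mat_deriv_adj[OF has_mat_deriv_delete[OF Y]])
  have "(\<lambda>\<mu>. adj_deriv n (Y \<mu>) Z $$ (i,j)) = (\<lambda>\<mu>. (-1)^(j+i) *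
      (\<Sum>a<n - 1. \<Sum>b<n - 1. adj_mat (mat_delete (Y \<mu>) j i) $$ (a,b) * mat_delete Z j i $$ (b,a)))"
    using ij by (simp add: adj_deriv_def mtrace_mult_eq_sum[OF has_mat_derivD(1)[OF A] mat_delete_carrier[OF Z]])
  then show ?thesis
    by (simp only:) (intro continuous_intros isCont_has_mat_deriv[OF A]; simp)
qed

lemma isCont_eq_zero_off_finite:
  fixes f :: "real \<Rightarrow> real"
  assumes "finite N" "isCont f a" "\<And>\<mu>. \<mu> \<notin> N \<Longrightarrow> f \<mu> = 0"
  shows "f a = 0"
proof -
  have "\<forall>\<^sub>F \<mu> in at a. \<mu> \<notin> N"
    using islimpt_finite[OF assms(1)] islimpt_iff_eventually by blast
  then have "\<forall>\<^sub>F \<mu> in at a. f \<mu> = 0"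
    by (rule eventually_mono) (rule assms(3))
  then have "(f \<longlongrightarrow> 0) (at a)" by (rule tendsto_eventually)
  moreover have "(f \<longlongrightarrow> f a) (at a)" using assms(2) by (simp add: isCont_def)
  ultimately show ?thesis using tendsto_unique[OF at_neq_bot] by metis
qed

lemma finite_det_shift_zeros:
  assumes Y: "(Y :: real mat) \<in> carrier_mat n n"
  shows "finite {\<mu>. det (Y + \<mu> \<cdot>\<^sub>m 1\<^sub>m n) = 0}"
proof -
  have "det (Y + \<mu> \<cdot>\<^sub>m 1\<^sub>m n) = poly (char_poly (- Y)) \<mu>" for \<mu>
    unfolding char_poly_def
    by (rule poly_det_cong[symmetric, of _ n]) (use Y in \<open>auto simp: char_poly_matrix_def\<close>)
  moreover have "char_poly (- Y) \<noteq> 0"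
    using degree_monic_char_poly[of "- Y" n] Y by auto
  ultimately show ?thesis using poly_roots_finite by simp
qed

lemma commutator_add_scalar:
  fixes Y M :: "real mat"
  assumes "Y \<in> carrier_mat n n" "M \<in> carrier_mat n n"
  shows "M * (Y + \<mu> \<cdot>\<^sub>m 1\<^sub>m n) - (Y + \<mu> \<cdot>\<^sub>m 1\<^sub>m n) * M = M * Y - Y * M"
proof -
  have "M * (Y + \<mu> \<cdot>\<^sub>m 1\<^sub>m n) = M * Y + \<mu> \<cdot>\<^sub>m M"
    using assms by (simp add: mult_add_distrib_mat[of M n n Y n] mult_smult_distrib[of M n n _ n])
  moreover have "(Y + \<mu> \<cdot>\<^sub>m 1\<^sub>m n) * M = Y * M + \<mu> \<cdot>\<^sub>m M"
    using assms by (simp add: add_mult_distrib_mat[of Y n n _ M n] mult_smult_assoc_mat[of _ n n M n])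
  ultimately show ?thesis
    using assms by (intro eq_matI) auto
qed

lemma mat_smult_cancel:
  fixes A B :: "real mat"
  assumes "A \<in> carrier_mat n n" "B \<in> carrier_mat n n" "d \<cdot>\<^sub>m A = d \<cdot>\<^sub>m B" "d \<noteq> 0"
  shows "A = B"
proof (rule eq_matI)
  fix i j assume "i < dim_row B" "j < dim_col B"
  then have "d * A $$ (i,j) = d * B $$ (i,j)"
    using assms(1,2) arg_cong[OF assms(3), of "\<lambda>C. C $$ (i,j)"] by auto
  then show "A $$ (i,j) = B $$ (i,j)" using assms(4) by simp
qed (use assms in auto)

lemma mtrace_adj_commutator:
  assumes Y: "Y \<in> carrier_mat n n" and M: "M \<in> carrier_mat n n"
  shows "mtrace (adj_mat Y * (M * Y - Y * M)) = 0"
proof -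
  have A: "adj_mat Y \<in> carrier_mat n n" by (rule adj_mat(1)[OF Y])
  have "mtrace (adj_mat Y * (M * Y - Y * M)) = mtrace (adj_mat Y * (M * Y)) - mtrace (adj_mat Y * (Y * M))"
    using A M Y by (subst mult_minus_distrib_mat[OF A]) (auto intro!: mtrace_minus)
  also have "mtrace (adj_mat Y * (M * Y)) = mtrace ((Y * adj_mat Y) * M)"
    using A M Y mtrace_mult_comm[of "adj_mat Y * M" n Y] by (simp add: assoc_mult_mat[of _ n n _ n _ n])
  also have "mtrace (adj_mat Y * (Y * M)) = mtrace ((adj_mat Y * Y) * M)"
    using A M Y by (simp add: assoc_mult_mat[of _ n n _ n _ n])
  finally show ?thesis unfolding adj_mat(2,3)[OF Y] by simp
qed

text \<open>Differentiating \<open>Y adj Y = det Y \<cdot> 1\<close> in direction \<open>Z\<close>.\<close>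

lemma mult_adj_deriv:
  assumes Y: "Y \<in> carrier_mat n n" and Z: "Z \<in> carrier_mat n n"
  shows "Z * adj_mat Y + Y * adj_deriv n Y Z = mtrace (adj_mat Y * Z) \<cdot>\<^sub>m 1\<^sub>m n"
proof (rule eq_matI)
  define Yt where "Yt t = Y + t \<cdot>\<^sub>m Z" for t
  have Yt0: "Yt 0 = Y" using Y Z by (intro eq_matI) (auto simp: Yt_def)
  have dY: "has_mat_deriv n Yt Z 0" unfolding Yt_def by (rule has_mat_deriv_line[OF Y Z])
  fix i j assume "i < dim_row (mtrace (adj_mat Y * Z) \<cdot>\<^sub>m 1\<^sub>m n)" "j < dim_col (mtrace (adj_mat Y * Z) \<cdot>\<^sub>m 1\<^sub>m n)"
  then have ij: "i < n" "j < n" by auto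
  have "(\<lambda>t. (Yt t * adj_mat (Yt t)) $$ (i,j)) = (\<lambda>t. det (Yt t) * (if i = j then 1 else 0))"
    using adj_mat(2)[OF has_mat_derivD(1)[OF dY]] ij by (intro ext) simp
  then have "((\<lambda>t. (Yt t * adj_mat (Yt t)) $$ (i,j)) has_real_derivative
      mtrace (adj_mat Y * Z) * (if i = j then 1 else 0)) (at 0)"
    using DERIV_cmult_right[OF has_real_derivative_det[OF dY]] by (simp add: Yt0)
  moreover have "((\<lambda>t. (Yt t * adj_mat (Yt t)) $$ (i,j)) has_real_derivative
      (Z * adj_mat Y + Y * adj_deriv n Y Z) $$ (i,j)) (at 0)"
    using has_mat_derivD(3)[OF has_mat_deriv_mult[OF dY has_mat_deriv_adj[OF dY]] ij] by (simp add: Yt0)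
  ultimately show "(Z * adj_mat Y + Y * adj_deriv n Y Z) $$ (i,j) = (mtrace (adj_mat Y * Z) \<cdot>\<^sub>m 1\<^sub>m n) $$ (i,j)"
    using DERIV_unique ij by fastforce
qed (use Y Z adj_mat(1)[OF Y] in \<open>auto simp: adj_deriv_def\<close>)

text \<open>Along a commutator the determinant is stationary, so \<open>[M,Y] adj Y + Y adj' = 0\<close>;
  multiplying by \<open>adj Y\<close> solves for \<open>adj'\<close>.\<close>

lemma adj_deriv_commutator_invertible:
  assumes Y: "Y \<in> carrier_mat n n" and M: "M \<in> carrier_mat n n" and d: "det Y \<noteq> 0"
  shows "adj_deriv n Y (M * Y - Y * M) = M * adj_mat Y - adj_mat Y * M"
proof -
  define Z where "Z = M * Y - Y * M"
  define A where "A = adj_mat Y"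
  define A' where "A' = adj_deriv n Y Z"
  have Zc: "Z \<in> carrier_mat n n" using Y M by (auto simp: Z_def)
  have Ac: "A \<in> carrier_mat n n" using adj_mat(1)[OF Y] by (simp add: A_def)
  have A'c: "A' \<in> carrier_mat n n" by (simp add: A'_def)
  have YA: "Y * A = det Y \<cdot>\<^sub>m 1\<^sub>m n" "A * Y = det Y \<cdot>\<^sub>m 1\<^sub>m n"
    using adj_mat(2,3)[OF Y] by (auto simp: A_def)
  have key: "Z * A + Y * A' = 0 \<cdot>\<^sub>m 1\<^sub>m n"
    using mult_adj_deriv[OF Y Zc] mtrace_adj_commutator[OF Y M] by (simp add: A_def A'_def Z_def)
  have "det Y \<cdot>\<^sub>m A' = A * (Y * A')"
    using Ac Y A'c YA(2) by (simp add: assoc_mult_mat[symmetric, of A n n Y n A' n] mult_smult_assoc_mat[of _ n n A' n])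
  also have "Y * A' = - (Z * A)"
  proof -
    have "Y * A' = (Z * A + Y * A') - Z * A" using Zc Ac Y A'c by (intro eq_matI) auto
    then show ?thesis using key Zc Ac by (intro eq_matI) auto
  qed
  also have "A * (- (Z * A)) = det Y \<cdot>\<^sub>m (M * A - A * M)"
  proof -
    have "A * Z * A = (A * (M * Y) - A * (Y * M)) * A"
      unfolding Z_def by (rule arg_cong[of _ _ "\<lambda>C. C * A"], rule mult_minus_distrib_mat) (use Ac M Y in auto)
    also have "\<dots> = A * (M * Y) * A - A * (Y * M) * A"
      by (rule minus_mult_distrib_mat) (use Ac M Y in auto)
    also have "\<dots> = A * M * (Y * A) - (A * Y) * M * A"
      using Ac M Y by (simp add: assoc_mult_mat[of _ n n _ n _ n])
    also have "\<dots> = det Y \<cdot>\<^sub>m (A * M) - det Y \<cdot>\<^sub>m (M * A)"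
      using Ac M by (simp add: YA mult_smult_distrib[of _ n n _ n] mult_smult_assoc_mat[of _ n n _ n])
    finally show ?thesis
      using Ac M Zc by (intro eq_matI) (auto simp: algebra_simps)
  qed
  finally show ?thesis
    using Ac M by (intro mat_smult_cancel[OF A'c _ _ d, unfolded A'_def Z_def]) (auto simp: A_def A'_def Z_def)
qed

text \<open>The invertible case extends to all \<open>Y\<close> because both sides are continuous along the
  line \<open>Y + \<mu> \<cdot> 1\<close>, on which \<open>Y\<close> is singular for finitely many \<open>\<mu>\<close> only, while the
  commutator \<open>[M, Y + \<mu> \<cdot> 1] = [M, Y]\<close> does not move.\<close>

lemma adj_deriv_commutator:
  assumes Y: "Y \<in> carrier_mat n n" and M: "M \<in> carrier_mat n n"
  shows "adj_deriv n Y (M * Y - Y * M) = M * adj_mat Y - adj_mat Y * M"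
proof (rule eq_matI)
  define Ys where "Ys \<mu> = Y + \<mu> \<cdot>\<^sub>m 1\<^sub>m n" for \<mu> :: real
  have Ysc: "Ys \<mu> \<in> carrier_mat n n" for \<mu> using Y by (simp add: Ys_def)
  have dYs: "has_mat_deriv n Ys (1\<^sub>m n) \<mu>" for \<mu>
    unfolding Ys_def by (rule has_mat_deriv_line[OF Y one_carrier_mat])
  note dA = has_mat_deriv_adj[OF dYs]
  note dC = has_mat_deriv_diff[OF has_mat_deriv_mult[OF has_mat_deriv_const[OF M] dA]
      has_mat_deriv_mult[OF dA has_mat_deriv_const[OF M]]]
  fix i j assume "i < dim_row (M * adj_mat Y - adj_mat Y * M)" "j < dim_col (M * adj_mat Y - adj_mat Y * M)"
  then have ij: "i < n" "j < n" using M adj_mat(1)[OF Y] by auto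
  define f where "f \<mu> = adj_deriv n (Ys \<mu>) (M * Y - Y * M) $$ (i,j)
      - (M * adj_mat (Ys \<mu>) - adj_mat (Ys \<mu>) * M) $$ (i,j)" for \<mu>
  have "f 0 = 0"
  proof (rule isCont_eq_zero_off_finite[OF finite_det_shift_zeros[OF Y], where f = f])
    show "isCont f 0"
      unfolding f_def using Y M ij
      by (intro continuous_intros isCont_adj_deriv[OF dYs] isCont_has_mat_deriv[OF dC]) auto
    fix \<mu> assume "\<mu> \<notin> {\<mu>. det (Y + \<mu> \<cdot>\<^sub>m 1\<^sub>m n) = 0}"
    then show "f \<mu> = 0"
      using adj_deriv_commutator_invertible[OF Ysc M] commutator_add_scalar[OF Y M]
      by (simp add: f_def Ys_def)
  qed
  moreover have "Ys 0 = Y" using Y by (intro eq_matI) (auto simp: Ys_def)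
  ultimately show "adj_deriv n Y (M * Y - Y * M) $$ (i,j) = (M * adj_mat Y - adj_mat Y * M) $$ (i,j)"
    by (simp add: f_def)
qed (use Y M adj_mat(1)[OF Y] in \<open>auto simp: adj_deriv_def\<close>)

section \<open>The Calogero--Moser matrices and their partial derivatives\<close>

definition inv_diff :: "(nat \<Rightarrow> real) \<Rightarrow> nat \<Rightarrow> nat \<Rightarrow> real" where
  "inv_diff x a b = (if a = b then 0 else 1 / (x a - x b))"

definition Lmat_dx :: "nat \<Rightarrow> (nat \<Rightarrow> real) \<Rightarrow> nat \<Rightarrow> real mat" where
  "Lmat_dx n x m = mat n n (\<lambda>(i,j).
     (if i = m then - (inv_diff x m j)\<^sup>2 else 0) + (if j = m then (inv_diff x i m)\<^sup>2 else 0))"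

definition diag_unit_mat :: "nat \<Rightarrow> nat \<Rightarrow> real mat" where
  "diag_unit_mat n m = mat n n (\<lambda>(i,j). if i = m \<and> j = m then 1 else 0)"

lemma inv_diff_diag[simp]: "inv_diff x a a = 0"
  by (simp add: inv_diff_def)

lemma inv_diff_antisym: "inv_diff x a b = - inv_diff x b a"
  by (simp add: inv_diff_def minus_divide_right)

lemma inv_diff_mult_diff:
  "inj_on x {..<n} \<Longrightarrow> a < n \<Longrightarrow> b < n \<Longrightarrow> a \<noteq> b \<Longrightarrow> inv_diff x a b * (x a - x b) = 1"
  by (auto simp: inv_diff_def dest: inj_onD)

lemma inv_diff_three_term:
  assumes "inj_on x {..<n}" "i < n" "j < n" "l < n" "i \<noteq> j" "l \<noteq> i" "l \<noteq> j"
  shows "inv_diff x i l * inv_diff x l j = inv_diff x i j * (inv_diff x i l + inv_diff x l j)"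
proof -
  have "x i - x l \<noteq> 0" "x l - x j \<noteq> 0" "x i - x j \<noteq> 0"
    using assms by (auto dest: inj_onD)
  then show ?thesis using assms by (simp add: inv_diff_def field_simps)
qed

lemma Lmat_carrier[simp]: "Lmat n x p \<in> carrier_mat n n"
  by (simp add: Lmat_def)

lemma Lmat_index: "i < n \<Longrightarrow> j < n \<Longrightarrow> Lmat n x p $$ (i,j) = (if i = j then p i else inv_diff x i j)"
  by (simp add: Lmat_def inv_diff_def)

lemma shiftL_carrier[simp]: "shiftL n lam x p \<in> carrier_mat n n"
  unfolding shiftL_def by (rule minus_carrier_mat[OF Lmat_carrier])

lemma shiftL_index:
  "i < n \<Longrightarrow> j < n \<Longrightarrow> shiftL n lam x p $$ (i,j) = (if i = j then lam - p i else 0) - inv_diff x i j"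
  by (simp add: shiftL_def Lmat_index carrier_matD[OF Lmat_carrier])

lemma Xmat_carrier[simp]: "Xmat n x \<in> carrier_mat n n"
  by (simp add: Xmat_def)

lemma Xmat_index: "i < n \<Longrightarrow> j < n \<Longrightarrow> Xmat n x $$ (i,j) = (if i = j then x i else 0)"
  by (simp add: Xmat_def)

lemma Lmat_dx_carrier[simp]: "Lmat_dx n x m \<in> carrier_mat n n"
  by (simp add: Lmat_dx_def)

lemma diag_unit_mat_carrier[simp]: "diag_unit_mat n m \<in> carrier_mat n n"
  by (simp add: diag_unit_mat_def)

lemma has_mat_deriv_Lmat_x:
  assumes inj: "inj_on x {..<n}" and m: "m < n"
  shows "has_mat_deriv n (\<lambda>t. Lmat n (x(m := t)) p) (Lmat_dx n x m) (x m)"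
  unfolding has_mat_deriv_def
proof (intro conjI allI impI)
  fix i j assume ij: "i < n" "j < n"
  have ne: "x a - x b \<noteq> 0" if "a < n" "b < n" "a \<noteq> b" for a b
    using inj that by (auto dest: inj_onD)
  show "((\<lambda>t. Lmat n (x(m := t)) p $$ (i,j)) has_real_derivative Lmat_dx n x m $$ (i,j)) (at (x m))"
    using ij ne[OF ij] ne[OF m ij(2)] ne[OF ij(1) m]
    by (cases "i = j"; cases "i = m"; cases "j = m")
      (auto simp: Lmat_index Lmat_dx_def inv_diff_def power2_eq_square
        intro!: derivative_eq_intros)
qed auto

lemma has_mat_deriv_Lmat_p:
  "has_mat_deriv n (\<lambda>t. Lmat n x (p(m := t))) (diag_unit_mat n m) (p m)"
  unfolding has_mat_deriv_def
proof (intro conjI allI impI)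
  fix i j assume "i < n" "j < n"
  then show "((\<lambda>t. Lmat n x (p(m := t)) $$ (i,j)) has_real_derivative diag_unit_mat n m $$ (i,j)) (at (p m))"
    by (cases "i = j"; cases "i = m") (auto simp: Lmat_index diag_unit_mat_def)
qed auto

lemma has_mat_deriv_Xmat:
  "has_mat_deriv n (\<lambda>t. Xmat n (x(m := t))) (diag_unit_mat n m) (x m)"
  unfolding has_mat_deriv_def
proof (intro conjI allI impI)
  fix i j assume "i < n" "j < n"
  then show "((\<lambda>t. Xmat n (x(m := t)) $$ (i,j)) has_real_derivative diag_unit_mat n m $$ (i,j)) (at (x m))"
    by (cases "i = j"; cases "i = m") (auto simp: Xmat_index diag_unit_mat_def)
qed auto

lemma has_mat_deriv_shiftL_x:
  "inj_on x {..<n} \<Longrightarrow> m < n \<Longrightarrow>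
    has_mat_deriv n (\<lambda>t. shiftL n lam (x(m := t)) p) (- Lmat_dx n x m) (x m)"
  unfolding shiftL_def by (rule has_mat_deriv_shift[OF has_mat_deriv_Lmat_x])

lemma has_mat_deriv_shiftL_p:
  "has_mat_deriv n (\<lambda>t. shiftL n lam x (p(m := t))) (- diag_unit_mat n m) (p m)"
  unfolding shiftL_def by (rule has_mat_deriv_shift[OF has_mat_deriv_Lmat_p])

lemma mtrace_mult_diag_unit_mat:
  assumes "B \<in> carrier_mat n n" "m < n"
  shows "mtrace (B * diag_unit_mat n m) = B $$ (m,m)"
proof -
  have "(\<Sum>l<n. B $$ (i,l) * diag_unit_mat n m $$ (l,i)) = (if i = m then B $$ (m,m) else 0)" if "i < n" for i
    using assms that by (cases "i = m") (simp_all add: diag_unit_mat_def if_distrib cong: if_cong)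
  then show ?thesis using assms by (simp add: mtrace_mult_eq_sum)
qed

lemma mtrace_mult_Lmat_dx:
  assumes B: "B \<in> carrier_mat n n" and a: "a < n"
  shows "mtrace (B * Lmat_dx n x a) = (\<Sum>l<n. (inv_diff x a l)\<^sup>2 * (B $$ (a,l) - B $$ (l,a)))"
proof -
  have sq: "(inv_diff x v a)\<^sup>2 = (inv_diff x a v)\<^sup>2" for v
    by (subst inv_diff_antisym) simp
  have "mtrace (B * Lmat_dx n x a) =
      (\<Sum>u<n. \<Sum>v<n. if u = a then B $$ (a,v) * (inv_diff x v a)\<^sup>2 else 0) - (\<Sum>u<n. B $$ (u,a) * (inv_diff x a u)\<^sup>2)"
    using B a by (simp add: mtrace_mult_eq_sum Lmat_dx_def distrib_left sum.distrib sum_subtractf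
        if_distrib[of "\<lambda>c. _ * c"] cong: if_cong)
  also have "(\<Sum>u<n. \<Sum>v<n. if u = a then B $$ (a,v) * (inv_diff x v a)\<^sup>2 else 0) =
      (\<Sum>v<n. B $$ (a,v) * (inv_diff x a v)\<^sup>2)"
    using a by (subst sum.swap) (simp add: sq)
  also have "(\<Sum>v<n. B $$ (a,v) * (inv_diff x a v)\<^sup>2) - (\<Sum>u<n. B $$ (u,a) * (inv_diff x a u)\<^sup>2) =
      (\<Sum>l<n. (inv_diff x a l)\<^sup>2 * (B $$ (a,l) - B $$ (l,a)))"
    by (simp add: sum_subtractf[symmetric] algebra_simps)
  finally show ?thesis .
qed

lemma pdx_mtrace_shiftL_pow:
  assumes "inj_on x {..<n}" "m < n"
  shows "pdx (\<lambda>x p. mtrace (shiftL n lam x p ^\<^sub>m k)) x p m =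
    - real k * mtrace (shiftL n lam x p ^\<^sub>m (k - 1) * Lmat_dx n x m)"
  using DERIV_imp_deriv[OF has_real_derivative_mtrace_pow[OF has_mat_deriv_shiftL_x[OF assms]]]
  by (simp add: pdx_def mtrace_mult_uminus_right[of _ n])

lemma pdp_mtrace_shiftL_pow:
  "pdp (\<lambda>x p. mtrace (shiftL n lam x p ^\<^sub>m k)) x p m =
    - real k * mtrace (shiftL n lam x p ^\<^sub>m (k - 1) * diag_unit_mat n m)"
  using DERIV_imp_deriv[OF has_real_derivative_mtrace_pow[OF has_mat_deriv_shiftL_p]]
  by (simp add: pdp_def mtrace_mult_uminus_right[of _ n])

lemma pdx_Ik:
  assumes "inj_on x {..<n}" "m < n" "k \<ge> 1"
  shows "pdx (Ik n k) x p m = mtrace (Lmat n x p ^\<^sub>m (k - 1) * Lmat_dx n x m)"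
  using DERIV_imp_deriv[OF DERIV_cmult[where c = "1 / real k",
        OF has_real_derivative_mtrace_pow[OF has_mat_deriv_Lmat_x[OF assms(1,2)], where k = k]]] assms(3)
  by (simp add: pdx_def Ik_def)

lemma pdp_Ik:
  assumes "k \<ge> 1"
  shows "pdp (Ik n k) x p m = mtrace (Lmat n x p ^\<^sub>m (k - 1) * diag_unit_mat n m)"
  using DERIV_imp_deriv[OF DERIV_cmult[where c = "1 / real k",
        OF has_real_derivative_mtrace_pow[OF has_mat_deriv_Lmat_p, where k = k]]] assms
  by (simp add: pdp_def Ik_def)

definition offdiag_ones :: "nat \<Rightarrow> real mat" where
  "offdiag_ones n = mat n n (\<lambda>(i,j). if i = j then 0 else 1)"

lemma offdiag_ones_carrier[simp]: "offdiag_ones n \<in> carrier_mat n n"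
  by (simp add: offdiag_ones_def)

lemma index_Xmat_mult:
  "W \<in> carrier_mat n n \<Longrightarrow> i < n \<Longrightarrow> j < n \<Longrightarrow> (Xmat n x * W) $$ (i,j) = x i * W $$ (i,j)"
  by (simp add: index_mult_mat_sum[of _ n] Xmat_index if_distrib if_distribR del: index_mult_mat(1) cong: if_cong)

lemma index_mult_Xmat:
  "W \<in> carrier_mat n n \<Longrightarrow> i < n \<Longrightarrow> j < n \<Longrightarrow> (W * Xmat n x) $$ (i,j) = W $$ (i,j) * x j"
  by (simp add: index_mult_mat_sum[of _ n] Xmat_index if_distrib if_distribR del: index_mult_mat(1) cong: if_cong)

lemma index_mult_offdiag_ones:
  assumes "W \<in> carrier_mat n n" "i < n" "j < n"
  shows "(W * offdiag_ones n) $$ (i,j) = (\<Sum>l<n. W $$ (i,l)) - W $$ (i,j)"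
proof -
  have "(W * offdiag_ones n) $$ (i,j) = (\<Sum>l<n. W $$ (i,l) - (if l = j then W $$ (i,j) else 0))"
    using assms by (auto simp: index_mult_mat_sum[of _ n] offdiag_ones_def simp del: index_mult_mat(1)
        intro!: sum.cong)
  then show ?thesis using assms by (simp add: sum_subtractf)
qed

lemma offdiag_ones_mult_index:
  assumes "W \<in> carrier_mat n n" "i < n" "j < n"
  shows "(offdiag_ones n * W) $$ (i,j) = (\<Sum>l<n. W $$ (l,j)) - W $$ (i,j)"
proof -
  have "(offdiag_ones n * W) $$ (i,j) = (\<Sum>l<n. W $$ (l,j) - (if l = i then W $$ (i,j) else 0))"
    using assms by (auto simp: index_mult_mat_sum[of _ n] offdiag_ones_def simp del: index_mult_mat(1)
        intro!: sum.cong)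
  then show ?thesis using assms by (simp add: sum_subtractf)
qed

text \<open>With \<open>J = e e\<^sup>T - 1\<close>, \<open>x\<^sup>T A e - tr (X A) = tr (X A J)\<close>.\<close>

lemma calE_minus_calG:
  "calE n lam x p - calG n lam x p =
    mtrace (Xmat n x * (adj_mat (shiftL n lam x p) * offdiag_ones n))"
proof -
  define A where "A = adj_mat (shiftL n lam x p)"
  have A: "A \<in> carrier_mat n n" unfolding A_def by (rule adj_mat(1)[OF shiftL_carrier])
  have "calE n lam x p = (\<Sum>i<n. x i * (\<Sum>j<n. A $$ (i,j)))"
    using A by (simp add: calE_def A_def[symmetric] scalar_prod_def atLeast0LessThan)
  moreover have "calG n lam x p = (\<Sum>i<n. x i * A $$ (i,i))"
    using A by (simp add: calG_def A_def[symmetric] mtrace_eq_sum[OF mult_carrier_mat[OF Xmat_carrier A]]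
        index_Xmat_mult)
  moreover have "mtrace (Xmat n x * (A * offdiag_ones n)) = (\<Sum>i<n. x i * (\<Sum>j<n. A $$ (i,j)) - x i * A $$ (i,i))"
    using A by (simp add: mtrace_eq_sum[OF mult_carrier_mat[OF Xmat_carrier mult_carrier_mat[OF A offdiag_ones_carrier]]]
        index_Xmat_mult[OF mult_carrier_mat[OF A offdiag_ones_carrier]] index_mult_offdiag_ones[OF A]
        right_diff_distrib)
  ultimately show ?thesis by (simp add: A_def sum_subtractf)
qed

lemma has_real_derivative_mtrace_adj_form:
  assumes X: "has_mat_deriv n X X' t0" and S: "has_mat_deriv n S S' t0" and J: "J \<in> carrier_mat n n"
  shows "((\<lambda>t. mtrace (X t * (adj_mat (S t) * J))) has_real_derivative
    mtrace (X' * (adj_mat (S t0) * J)) + mtrace (X t0 * (adj_deriv n (S t0) S' * J))) (at t0)"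
proof -
  note c = has_mat_derivD(1,2)[OF X] has_mat_derivD(1)[OF S]
  have A: "adj_mat (S t0) \<in> carrier_mat n n" by (rule adj_mat(1)[OF c(3)])
  have "X' * (adj_mat (S t0) * J) + X t0 * (adj_deriv n (S t0) S' * J + adj_mat (S t0) * 0\<^sub>m n n) =
      X' * (adj_mat (S t0) * J) + X t0 * (adj_deriv n (S t0) S' * J)"
    using A J by (simp add: right_add_zero_mat[OF mult_carrier_mat[OF adj_deriv_carrier J]])
  moreover have "mtrace (X' * (adj_mat (S t0) * J) + X t0 * (adj_deriv n (S t0) S' * J)) =
      mtrace (X' * (adj_mat (S t0) * J)) + mtrace (X t0 * (adj_deriv n (S t0) S' * J))"
    by (rule mtrace_add) (use c(1)[of t0] c(2) A J in auto)
  ultimately show ?thesis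
    using has_mat_deriv_mtrace[OF has_mat_deriv_mult[OF X
        has_mat_deriv_mult[OF has_mat_deriv_adj[OF S] has_mat_deriv_const[OF J]]]]
    by simp
qed

lemma pdx_EG:
  assumes "inj_on x {..<n}" "m < n"
  shows "pdx (\<lambda>x p. calE n lam x p - calG n lam x p) x p m =
    mtrace (diag_unit_mat n m * (adj_mat (shiftL n lam x p) * offdiag_ones n)) +
    mtrace (Xmat n x * (adj_deriv n (shiftL n lam x p) (- Lmat_dx n x m) * offdiag_ones n))"
  using DERIV_imp_deriv[OF has_real_derivative_mtrace_adj_form[OF has_mat_deriv_Xmat[of n x]
        has_mat_deriv_shiftL_x[OF assms] offdiag_ones_carrier]]
  by (simp add: pdx_def calE_minus_calG)

lemma pdp_EG:
  "pdp (\<lambda>x p. calE n lam x p - calG n lam x p) x p m =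
    mtrace (Xmat n x * (adj_deriv n (shiftL n lam x p) (- diag_unit_mat n m) * offdiag_ones n))"
  using DERIV_imp_deriv[OF has_real_derivative_mtrace_adj_form[OF has_mat_deriv_const[OF Xmat_carrier]
        has_mat_deriv_shiftL_p offdiag_ones_carrier]]
  by (simp add: pdp_def calE_minus_calG mtrace_def
      left_mult_zero_mat[OF mult_carrier_mat[OF adj_mat(1)[OF shiftL_carrier] offdiag_ones_carrier]])

section \<open>The Lax-type identity\<close>

text \<open>An abstract version of the off-diagonal part of \<open>\<lambda> - L\<close>: an antisymmetric kernel satisfying
  the three-term identity of \<open>1/(x\<^sub>a - x\<^sub>b)\<close>, and a matrix \<open>B\<close> commuting with
  \<open>S = diag q - \<kappa>\<close> (the commutation being written out entrywise).\<close>

locale lax_pair =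
  fixes n :: nat and \<kappa> :: "nat \<Rightarrow> nat \<Rightarrow> real" and q :: "nat \<Rightarrow> real" and B :: "real mat"
  assumes kernel_diag: "\<kappa> a a = 0"
    and kernel_antisym: "\<kappa> a b = - \<kappa> b a"
    and kernel_three_term: "\<lbrakk>i < n; j < n; l < n; i \<noteq> j; l \<noteq> i; l \<noteq> j\<rbrakk> \<Longrightarrow>
       \<kappa> i l * \<kappa> l j = \<kappa> i j * (\<kappa> i l + \<kappa> l j)"
    and commute: "\<lbrakk>i < n; j < n\<rbrakk> \<Longrightarrow>
       q i * B $$ (i,j) - (\<Sum>l<n. \<kappa> i l * B $$ (l,j)) = B $$ (i,j) * q j - (\<Sum>l<n. B $$ (i,l) * \<kappa> l j)"
begin

definition row_weight :: "nat \<Rightarrow> real" where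
  "row_weight a = (\<Sum>l<n. B $$ (a,l) * \<kappa> a l)"

definition S_entry :: "nat \<Rightarrow> nat \<Rightarrow> real" where
  "S_entry a b = (if a = b then q a else 0) - \<kappa> a b"

definition M_entry :: "nat \<Rightarrow> nat \<Rightarrow> real" where
  "M_entry a b = B $$ (a,b) * \<kappa> a b - (if a = b then row_weight a else 0)"

lemma sum_kernel_flip: "(\<Sum>l<n. \<kappa> l a * f l) = - (\<Sum>l<n. \<kappa> a l * f l)"
  by (subst kernel_antisym) (simp add: sum_negf)

lemma M_row_sum: "a < n \<Longrightarrow> (\<Sum>l<n. M_entry a l) = 0"
  by (simp add: M_entry_def row_weight_def sum_subtractf)

lemma sum_kernel_col:
  assumes b: "b < n"
  shows "(\<Sum>l<n. \<kappa> l b * B $$ (l,b)) = row_weight b"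
proof -
  have "(\<Sum>l<n. \<kappa> l b * B $$ (l,b)) = - (\<Sum>l<n. B $$ (b,l) * \<kappa> l b)"
    using sum_kernel_flip[of b "\<lambda>l. B $$ (l,b)"] commute[OF b b] by simp
  also have "\<dots> = row_weight b"
    using sum_kernel_flip[of b "\<lambda>l. B $$ (b,l)"] by (simp add: row_weight_def mult.commute)
  finally show ?thesis .
qed

lemma M_col_sum: "b < n \<Longrightarrow> (\<Sum>l<n. M_entry l b) = 0"
  using sum_kernel_col by (simp add: M_entry_def sum_subtractf mult.commute)

lemma sum_three_term:
  assumes ij: "i < n" "j < n" "i \<noteq> j"
  shows "(\<Sum>l<n. \<kappa> i l * \<kappa> l j * f l) =
    \<kappa> i j * (\<Sum>l<n. (\<kappa> i l + \<kappa> l j) * f l) - (\<kappa> i j)\<^sup>2 * (f i + f j)"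
proof -
  have "(\<Sum>l<n. \<kappa> i l * \<kappa> l j * f l) = (\<Sum>l<n. \<kappa> i j * ((\<kappa> i l + \<kappa> l j) * f l)
      - (if l = i then (\<kappa> i j)\<^sup>2 * f i else 0) - (if l = j then (\<kappa> i j)\<^sup>2 * f j else 0))"
    using ij kernel_three_term[OF ij(1,2) _ ij(3)]
    by (intro sum.cong refl) (auto simp: kernel_diag power2_eq_square algebra_simps)
  then show ?thesis using ij by (simp add: sum_subtractf sum_distrib_left distrib_left)
qed

lemma M_S_sum:
  assumes "i < n" "j < n"
  shows "(\<Sum>l<n. M_entry i l * S_entry l j) = B $$ (i,j) * \<kappa> i j * q j
    - (\<Sum>l<n. B $$ (i,l) * \<kappa> i l * \<kappa> l j) - (if i = j then row_weight i * q j else 0) + row_weight i * \<kappa> i j"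
proof -
  have "(\<Sum>l<n. M_entry i l * S_entry l j) = (\<Sum>l<n. (if l = j then B $$ (i,l) * \<kappa> i l * q j else 0)
      - B $$ (i,l) * \<kappa> i l * \<kappa> l j - (if l = i then (if i = j then row_weight i * q j else 0) else 0)
      + (if l = i then row_weight i * \<kappa> l j else 0))"
    by (intro sum.cong refl)
      (auto simp: M_entry_def S_entry_def kernel_diag left_diff_distrib right_diff_distrib)
  then show ?thesis using assms by (simp add: sum.distrib sum_subtractf)
qed

lemma S_M_sum:
  assumes "i < n" "j < n"
  shows "(\<Sum>l<n. S_entry i l * M_entry l j) = q i * B $$ (i,j) * \<kappa> i j
    - (if i = j then q i * row_weight j else 0) - (\<Sum>l<n. \<kappa> i l * B $$ (l,j) * \<kappa> l j) + \<kappa> i j * row_weight j"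
proof -
  have "(\<Sum>l<n. S_entry i l * M_entry l j) = (\<Sum>l<n. (if l = i then q i * B $$ (l,j) * \<kappa> l j else 0)
      - (if l = i then (if i = j then q i * row_weight j else 0) else 0)
      - \<kappa> i l * B $$ (l,j) * \<kappa> l j + (if l = j then \<kappa> i l * row_weight j else 0))"
    by (intro sum.cong refl)
      (auto simp: M_entry_def S_entry_def kernel_diag left_diff_distrib right_diff_distrib)
  then show ?thesis using assms by (simp add: sum.distrib sum_subtractf)
qed

lemma commutator_diag:
  assumes "i < n"
  shows "(\<Sum>l<n. M_entry i l * S_entry l i) - (\<Sum>l<n. S_entry i l * M_entry l i) =
    (\<Sum>l<n. (\<kappa> i l)\<^sup>2 * (B $$ (i,l) - B $$ (l,i)))"
proof -
  have "(\<Sum>l<n. M_entry i l * S_entry l i) - (\<Sum>l<n. S_entry i l * M_entry l i) =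
      (\<Sum>l<n. \<kappa> i l * B $$ (l,i) * \<kappa> l i - B $$ (i,l) * \<kappa> i l * \<kappa> l i)"
    using assms by (simp add: M_S_sum S_M_sum kernel_diag sum_subtractf)
  also have "\<dots> = (\<Sum>l<n. (\<kappa> i l)\<^sup>2 * (B $$ (i,l) - B $$ (l,i)))"
    by (intro sum.cong refl) (subst (1 2) kernel_antisym[of _ i], simp add: power2_eq_square algebra_simps)
  finally show ?thesis .
qed

lemma commutator_offdiag:
  assumes ij: "i < n" "j < n" "i \<noteq> j"
  shows "(\<Sum>l<n. M_entry i l * S_entry l j) - (\<Sum>l<n. S_entry i l * M_entry l j) =
    (B $$ (i,i) - B $$ (j,j)) * (\<kappa> i j)\<^sup>2"
proof -
  have "(\<Sum>l<n. M_entry i l * S_entry l j) - (\<Sum>l<n. S_entry i l * M_entry l j) =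
      (q j - q i) * B $$ (i,j) * \<kappa> i j + (\<Sum>l<n. \<kappa> i l * \<kappa> l j * (B $$ (l,j) - B $$ (i,l)))
      + (row_weight i - row_weight j) * \<kappa> i j"
  proof -
    have "(\<Sum>l<n. \<kappa> i l * \<kappa> l j * (B $$ (l,j) - B $$ (i,l))) =
        (\<Sum>l<n. \<kappa> i l * B $$ (l,j) * \<kappa> l j) - (\<Sum>l<n. B $$ (i,l) * \<kappa> i l * \<kappa> l j)"
      by (simp add: sum_subtractf[symmetric] algebra_simps)
    then show ?thesis unfolding M_S_sum[OF ij(1,2)] S_M_sum[OF ij(1,2)] using ij by (simp add: algebra_simps)
  qed
  also have "(\<Sum>l<n. (\<kappa> i l + \<kappa> l j) * (B $$ (l,j) - B $$ (i,l))) =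
      (q i - q j) * B $$ (i,j) - row_weight i + row_weight j"
    using commute[OF ij(1,2)] sum_kernel_col[OF ij(2)]
    by (simp add: row_weight_def distrib_right right_diff_distrib sum.distrib sum_subtractf algebra_simps)
  then have "(\<Sum>l<n. \<kappa> i l * \<kappa> l j * (B $$ (l,j) - B $$ (i,l))) =
      \<kappa> i j * ((q i - q j) * B $$ (i,j) - row_weight i + row_weight j) - (\<kappa> i j)\<^sup>2 * (B $$ (j,j) - B $$ (i,i))"
    using sum_three_term[OF ij, of "\<lambda>l. B $$ (l,j) - B $$ (i,l)"] by simp
  finally show ?thesis by (simp add: algebra_simps)
qed

end

definition lax_mat :: "nat \<Rightarrow> (nat \<Rightarrow> real) \<Rightarrow> real mat \<Rightarrow> real mat" where
  "lax_mat n x B = mat n n (\<lambda>(a,b). B $$ (a,b) * inv_diff x a b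
     - (if a = b then (\<Sum>l<n. B $$ (a,l) * inv_diff x a l) else 0))"

lemma lax_mat_carrier[simp]: "lax_mat n x B \<in> carrier_mat n n"
  by (simp add: lax_mat_def)

lemma lax_mat_index: "a < n \<Longrightarrow> b < n \<Longrightarrow> lax_mat n x B $$ (a,b) =
    B $$ (a,b) * inv_diff x a b - (if a = b then (\<Sum>l<n. B $$ (a,l) * inv_diff x a l) else 0)"
  by (simp add: lax_mat_def)

lemma lax_pair_shiftL:
  assumes inj: "inj_on x {..<n}" and B: "B \<in> carrier_mat n n"
    and BS: "B * shiftL n lam x p = shiftL n lam x p * B"
  shows "lax_pair n (inv_diff x) (\<lambda>a. lam - p a) B"
proof
  fix i j assume ij: "i < n" "j < n"
  have "(shiftL n lam x p * B) $$ (i,j) =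
      (\<Sum>l<n. (if l = i then (lam - p i) * B $$ (i,j) else 0) - inv_diff x i l * B $$ (l,j))"
    unfolding index_mult_mat_sum[OF shiftL_carrier B ij]
    by (intro sum.cong refl) (use ij in \<open>auto simp: shiftL_index left_diff_distrib\<close>)
  moreover have "(B * shiftL n lam x p) $$ (i,j) =
      (\<Sum>l<n. (if l = j then B $$ (i,j) * (lam - p j) else 0) - B $$ (i,l) * inv_diff x l j)"
    unfolding index_mult_mat_sum[OF B shiftL_carrier ij]
    by (intro sum.cong refl) (use ij in \<open>auto simp: shiftL_index right_diff_distrib\<close>)
  ultimately show "(lam - p i) * B $$ (i,j) - (\<Sum>l<n. inv_diff x i l * B $$ (l,j)) =
      B $$ (i,j) * (lam - p j) - (\<Sum>l<n. B $$ (i,l) * inv_diff x l j)"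
    using BS ij by (simp add: sum_subtractf)
qed (fact inv_diff_diag inv_diff_antisym inv_diff_three_term[OF inj])+

lemma lax_mat_commutator_index:
  assumes inj: "inj_on x {..<n}" and B: "B \<in> carrier_mat n n"
    and BS: "B * shiftL n lam x p = shiftL n lam x p * B" and ab: "a < n" "b < n"
  shows "(lax_mat n x B * shiftL n lam x p - shiftL n lam x p * lax_mat n x B) $$ (a,b) =
    (if a = b then (\<Sum>l<n. (inv_diff x a l)\<^sup>2 * (B $$ (a,l) - B $$ (l,a)))
     else (B $$ (a,a) - B $$ (b,b)) * (inv_diff x a b)\<^sup>2)"
proof -
  interpret lax_pair n "inv_diff x" "\<lambda>a. lam - p a" B by (rule lax_pair_shiftL[OF inj B BS])
  have entries: "lax_mat n x B $$ (a,b) = M_entry a b" "shiftL n lam x p $$ (a,b) = S_entry a b"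
    if "a < n" "b < n" for a b
    using that by (simp_all add: lax_mat_def M_entry_def row_weight_def S_entry_def shiftL_index)
  have "(lax_mat n x B * shiftL n lam x p - shiftL n lam x p * lax_mat n x B) $$ (a,b) =
      (\<Sum>l<n. lax_mat n x B $$ (a,l) * shiftL n lam x p $$ (l,b))
      - (\<Sum>l<n. shiftL n lam x p $$ (a,l) * lax_mat n x B $$ (l,b))"
    using ab by (simp add: index_mult_mat_sum[OF lax_mat_carrier shiftL_carrier]
        index_mult_mat_sum[OF shiftL_carrier lax_mat_carrier] carrier_matD[OF shiftL_carrier] carrier_matD[OF lax_mat_carrier]
        del: index_mult_mat(1))
  also have "\<dots> = (\<Sum>l<n. M_entry a l * S_entry l b) - (\<Sum>l<n. S_entry a l * M_entry l b)"
    using ab by (intro arg_cong2[where f = minus] sum.cong refl) (simp_all add: entries)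
  finally have "(lax_mat n x B * shiftL n lam x p - shiftL n lam x p * lax_mat n x B) $$ (a,b) =
      (\<Sum>l<n. M_entry a l * S_entry l b) - (\<Sum>l<n. S_entry a l * M_entry l b)" .
  then show ?thesis using ab commutator_diag commutator_offdiag by simp
qed


lemma lax_combination_index:
  assumes B: "B \<in> carrier_mat n n" and ab: "a < n" "b < n"
  shows "(\<Sum>m<n. mtrace (B * diag_unit_mat n m) * (- Lmat_dx n x m) $$ (a,b)
      - mtrace (B * Lmat_dx n x m) * (- diag_unit_mat n m) $$ (a,b)) =
    (if a = b then (\<Sum>l<n. (inv_diff x a l)\<^sup>2 * (B $$ (a,l) - B $$ (l,a)))
     else (B $$ (a,a) - B $$ (b,b)) * (inv_diff x a b)\<^sup>2)"
proof -
  have h1: "mtrace (B * diag_unit_mat n m) * (- Lmat_dx n x m) $$ (a,b) =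
      (if m = a then B $$ (a,a) * (inv_diff x a b)\<^sup>2 else 0)
      - (if m = b then B $$ (b,b) * (inv_diff x a b)\<^sup>2 else 0)" if "m \<in> {..<n}" for m
    using B ab that inv_diff_antisym[of x b a]
    by (auto simp: mtrace_mult_diag_unit_mat Lmat_dx_def algebra_simps)
  then have s1: "(\<Sum>m<n. mtrace (B * diag_unit_mat n m) * (- Lmat_dx n x m) $$ (a,b)) =
      (B $$ (a,a) - B $$ (b,b)) * (inv_diff x a b)\<^sup>2"
    using ab by (simp add: sum.cong[OF refl h1] sum_subtractf left_diff_distrib)
  have h2: "mtrace (B * Lmat_dx n x m) * (- diag_unit_mat n m) $$ (a,b) =
      (if m = a then (if a = b then - mtrace (B * Lmat_dx n x a) else 0) else 0)" if "m \<in> {..<n}" for m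
    using ab that by (auto simp: diag_unit_mat_def)
  then have s2: "(\<Sum>m<n. mtrace (B * Lmat_dx n x m) * (- diag_unit_mat n m) $$ (a,b)) =
      (if a = b then - mtrace (B * Lmat_dx n x a) else 0)"
    using ab by (simp add: sum.cong[OF refl h2])
  show ?thesis
    unfolding sum_subtractf s1 s2 using ab by (simp add: mtrace_mult_Lmat_dx[OF B])
qed

definition diag_part :: "nat \<Rightarrow> real mat \<Rightarrow> real mat" where
  "diag_part n B = mat n n (\<lambda>(a,b). if a = b then B $$ (a,a) else 0)"

lemma diag_part_carrier[simp]: "diag_part n B \<in> carrier_mat n n"
  by (simp add: diag_part_def)

lemma diag_part_index: "a < n \<Longrightarrow> b < n \<Longrightarrow> diag_part n B $$ (a,b) = (if a = b then B $$ (a,a) else 0)"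
  by (simp add: diag_part_def)

lemma lax_mat_commutator_Xmat:
  assumes inj: "inj_on x {..<n}" and B: "B \<in> carrier_mat n n"
  shows "lax_mat n x B * Xmat n x - Xmat n x * lax_mat n x B + B = diag_part n B"
proof (rule eq_matI)
  fix a b assume "a < dim_row (diag_part n B)" "b < dim_col (diag_part n B)"
  then have ab: "a < n" "b < n" by (auto simp: diag_part_def)
  have "(lax_mat n x B * Xmat n x - Xmat n x * lax_mat n x B + B) $$ (a,b) =
      B $$ (a,b) * (1 - inv_diff x a b * (x a - x b))"
    using B ab by (simp add: index_mult_Xmat[OF lax_mat_carrier] index_Xmat_mult[OF lax_mat_carrier]
        carrier_matD[OF lax_mat_carrier] carrier_matD[OF Xmat_carrier] lax_mat_index algebra_simps
        del: index_mult_mat(1))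
  then show "(lax_mat n x B * Xmat n x - Xmat n x * lax_mat n x B + B) $$ (a,b) = diag_part n B $$ (a,b)"
    using ab inv_diff_mult_diff[OF inj ab] by (cases "a = b") (simp_all add: diag_part_def)
qed (use B in \<open>auto simp: diag_part_def\<close>)

lemma shiftL_commutator_Xmat:
  assumes inj: "inj_on x {..<n}"
  shows "shiftL n lam x p * Xmat n x - Xmat n x * shiftL n lam x p = offdiag_ones n"
proof (rule eq_matI)
  fix a b assume "a < dim_row (offdiag_ones n)" "b < dim_col (offdiag_ones n)"
  then have ab: "a < n" "b < n" by (auto simp: offdiag_ones_def)
  have "(shiftL n lam x p * Xmat n x - Xmat n x * shiftL n lam x p) $$ (a,b) =
      inv_diff x a b * (x a - x b)"
    using ab by (simp add: index_mult_Xmat index_Xmat_mult shiftL_index carrier_matD[OF shiftL_carrier]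
        carrier_matD[OF Xmat_carrier] algebra_simps del: index_mult_mat(1))
  then show "(shiftL n lam x p * Xmat n x - Xmat n x * shiftL n lam x p) $$ (a,b) = offdiag_ones n $$ (a,b)"
    using ab inv_diff_mult_diff[OF inj ab] by (cases "a = b") (simp_all add: offdiag_ones_def)
qed (auto simp: carrier_matD[OF shiftL_carrier] carrier_matD[OF Xmat_carrier] offdiag_ones_def)

lemma offdiag_ones_commute_lax_mat:
  assumes inj: "inj_on x {..<n}" and B: "B \<in> carrier_mat n n"
    and BS: "B * shiftL n lam x p = shiftL n lam x p * B"
  shows "offdiag_ones n * lax_mat n x B = lax_mat n x B * offdiag_ones n"
proof (rule eq_matI)
  interpret lax_pair n "inv_diff x" "\<lambda>a. lam - p a" B by (rule lax_pair_shiftL[OF inj B BS])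
  have M: "lax_mat n x B $$ (a,b) = M_entry a b" if "a < n" "b < n" for a b
    using that by (simp add: lax_mat_def M_entry_def row_weight_def)
  fix a b assume "a < dim_row (lax_mat n x B * offdiag_ones n)" "b < dim_col (lax_mat n x B * offdiag_ones n)"
  then have ab: "a < n" "b < n" by (auto simp: lax_mat_def offdiag_ones_def)
  have "(\<Sum>l<n. lax_mat n x B $$ (l,b)) = 0" "(\<Sum>l<n. lax_mat n x B $$ (a,l)) = 0"
    using ab M M_col_sum M_row_sum by simp_all
  then show "(offdiag_ones n * lax_mat n x B) $$ (a,b) = (lax_mat n x B * offdiag_ones n) $$ (a,b)"
    using ab by (simp add: offdiag_ones_mult_index index_mult_offdiag_ones)
qed (auto simp: lax_mat_def offdiag_ones_def)

lemma mtrace_mult_commutator_eq_zero: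
  assumes W: "W \<in> carrier_mat n n" and S: "S \<in> carrier_mat n n" and X: "X \<in> carrier_mat n n"
    and WS: "W * S = S * W"
  shows "mtrace (W * (S * X - X * S)) = 0"
proof -
  have "mtrace (W * (S * X - X * S)) = mtrace (W * S * X) - mtrace (W * X * S)"
    using W S X by (simp add: mult_minus_distrib_mat[of _ n n _ n] mtrace_minus[of _ n])
  also have "mtrace (W * S * X) = mtrace (S * (W * X))"
    using W S X WS by simp
  also have "\<dots> = mtrace (W * X * S)"
    using W S X by (simp add: mtrace_mult_comm[of S n])
  finally show ?thesis by simp
qed

lemma mtrace_bracket_identity:
  fixes A B M S X J D :: "real mat"
  assumes c: "A \<in> carrier_mat n n" "B \<in> carrier_mat n n" "M \<in> carrier_mat n n"
      "S \<in> carrier_mat n n" "X \<in> carrier_mat n n" "J \<in> carrier_mat n n"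
    and D: "D = M * X - X * M + B" and JM: "J * M = M * J"
    and J: "J = S * X - X * S" and BAS: "B * A * S = S * (B * A)"
  shows "mtrace (D * (A * J)) + mtrace (X * ((M * A - A * M) * J)) = 0"
proof -
  note simps = add_mult_distrib_mat[of _ n n _ _ n] minus_mult_distrib_mat[of _ n n _ _ n]
    mult_minus_distrib_mat[of _ n n _ n] assoc_mult_mat[of _ n n _ n _ n] mtrace_add[of _ n] mtrace_minus[of _ n]
    minus_carrier_mat
  have "mtrace (D * (A * J)) = mtrace (M * (X * (A * J))) - mtrace (X * (M * (A * J))) + mtrace (B * A * J)"
    unfolding D using c by (simp add: simps)
  moreover have "mtrace (X * ((M * A - A * M) * J)) = mtrace (X * (M * (A * J))) - mtrace (X * (A * (M * J)))"
    using c by (simp add: simps)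
  moreover have "mtrace (M * (X * (A * J))) = mtrace (X * (A * (M * J)))"
    using c mtrace_mult_comm[of M n "X * (A * J)"] by (simp add: JM[symmetric] assoc_mult_mat[of _ n n _ n _ n])
  moreover have "mtrace (B * A * J) = 0"
    unfolding J using c BAS by (intro mtrace_mult_commutator_eq_zero) auto
  ultimately show ?thesis by simp
qed

lemma sum_mtrace_diag_unit_mat:
  assumes B: "B \<in> carrier_mat n n" and W: "W \<in> carrier_mat n n"
  shows "(\<Sum>m<n. mtrace (B * diag_unit_mat n m) * mtrace (diag_unit_mat n m * W)) =
    mtrace (diag_part n B * W)"
proof -
  have "mtrace (diag_unit_mat n m * W) = W $$ (m,m)" if "m < n" for m
    using W that mtrace_mult_comm[of "diag_unit_mat n m" n W] by (simp add: mtrace_mult_diag_unit_mat)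
  moreover have "mtrace (diag_part n B * W) = (\<Sum>m<n. B $$ (m,m) * W $$ (m,m))"
    using W by (simp add: mtrace_mult_eq_sum[OF diag_part_carrier W] diag_part_index if_distrib if_distribR
        cong: if_cong)
  ultimately show ?thesis using B by (simp add: mtrace_mult_diag_unit_mat)
qed

lemma mtrace_adj_deriv_lincomb:
  assumes P: "P \<in> carrier_mat n n" and Q: "Q \<in> carrier_mat n n"
    and Y: "Y \<in> carrier_mat n n" and Z: "Z \<in> carrier_mat n n" and Zs: "\<And>k. Zs k \<in> carrier_mat n n"
    and lin: "\<And>a b. a < n \<Longrightarrow> b < n \<Longrightarrow> Z $$ (a,b) = (\<Sum>k\<in>K. c k * Zs k $$ (a,b))"
  shows "mtrace (P * (adj_deriv n Y Z * Q)) = (\<Sum>k\<in>K. c k * mtrace (P * (adj_deriv n Y (Zs k) * Q)))"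
proof -
  have cyc: "mtrace (P * (W * Q)) = mtrace (Q * P * W)" if "W \<in> carrier_mat n n" for W
    using P Q that mtrace_mult_comm[of P n "W * Q"] mtrace_mult_comm[of "Q * P" n W] by simp
  show ?thesis unfolding cyc[OF adj_deriv_carrier]
    by (rule mtrace_mult_lincomb) (use P Q adj_deriv_lincomb[OF Y Z Zs lin] in auto)
qed

text \<open>The terms with partial derivatives of \<open>adj (\<lambda> - L)\<close> recombine, by linearity of
  \<open>adj_deriv\<close> in the direction, into a single derivative in the direction \<open>[M, \<lambda> - L]\<close>
  of the Lax identity.\<close>

lemma pbracket_EG_eq:
  assumes inj: "inj_on x {..<n}" and B: "B \<in> carrier_mat n n"
    and BS: "B * shiftL n lam x p = shiftL n lam x p * B"
    and dp: "\<And>m. m < n \<Longrightarrow> pdp F x p m = c * mtrace (B * diag_unit_mat n m)"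
    and dx: "\<And>m. m < n \<Longrightarrow> pdx F x p m = c * mtrace (B * Lmat_dx n x m)"
  shows "pbracket n F (\<lambda>x p. calE n lam x p - calG n lam x p) x p =
    c * (mtrace (diag_part n B * (adj_mat (shiftL n lam x p) * offdiag_ones n))
      + mtrace (Xmat n x * (adj_deriv n (shiftL n lam x p)
          (lax_mat n x B * shiftL n lam x p - shiftL n lam x p * lax_mat n x B) * offdiag_ones n)))"
proof -
  define S where "S = shiftL n lam x p"
  define A where "A = adj_mat S"
  define J where "J = offdiag_ones n"
  define X where "X = Xmat n x"
  define M where "M = lax_mat n x B"
  define \<phi> where "\<phi> Z = mtrace (X * (adj_deriv n S Z * J))" for Z
  define coef where "coef = case_sum (\<lambda>m. mtrace (B * diag_unit_mat n m)) (\<lambda>m. - mtrace (B * Lmat_dx n x m))"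
  define dir where "dir = case_sum (\<lambda>m. - Lmat_dx n x m) (\<lambda>m. - diag_unit_mat n m)"
  have Ac: "A \<in> carrier_mat n n"
    using adj_mat(1)[OF shiftL_carrier] by (simp add: S_def A_def)
  have "pbracket n F (\<lambda>x p. calE n lam x p - calG n lam x p) x p =
      (\<Sum>m<n. c * (mtrace (B * diag_unit_mat n m) * mtrace (diag_unit_mat n m * (A * J)))
        + c * (coef (Inl m) * \<phi> (dir (Inl m)) + coef (Inr m) * \<phi> (dir (Inr m))))"
    unfolding pbracket_def
    by (intro sum.cong refl)
      (simp add: pdx_EG[OF inj] pdp_EG dp dx \<phi>_def coef_def dir_def S_def A_def J_def X_def algebra_simps)
  also have "\<dots> = c * (\<Sum>m<n. mtrace (B * diag_unit_mat n m) * mtrace (diag_unit_mat n m * (A * J)))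
      + c * (\<Sum>k\<in>{..<n} <+> {..<n}. coef k * \<phi> (dir k))"
    by (simp add: sum.Plus sum.distrib sum_distrib_left distrib_left)
  also have "(\<Sum>m<n. mtrace (B * diag_unit_mat n m) * mtrace (diag_unit_mat n m * (A * J))) =
      mtrace (diag_part n B * (A * J))"
    using Ac by (simp add: J_def sum_mtrace_diag_unit_mat[OF B])
  also have "(\<Sum>k\<in>{..<n} <+> {..<n}. coef k * \<phi> (dir k)) = \<phi> (M * S - S * M)"
    unfolding \<phi>_def
  proof (rule mtrace_adj_deriv_lincomb[symmetric])
    fix a b assume "a < n" "b < n"
    then show "(M * S - S * M) $$ (a,b) = (\<Sum>k\<in>{..<n} <+> {..<n}. coef k * dir k $$ (a,b))"
      by (simp add: sum.Plus coef_def dir_def M_def S_def sum.distrib[symmetric]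
          lax_mat_commutator_index[OF inj B BS] lax_combination_index[OF B])
  qed (auto simp: S_def J_def X_def M_def dir_def split: sum.split
      intro: minus_carrier_mat[OF mult_carrier_mat[OF shiftL_carrier lax_mat_carrier]])
  finally show ?thesis by (simp add: \<phi>_def S_def A_def J_def X_def M_def distrib_left)
qed

lemma pbracket_EG_eq_zero:
  assumes inj: "inj_on x {..<n}" and B: "B \<in> carrier_mat n n"
    and BS: "B * shiftL n lam x p = shiftL n lam x p * B"
    and dp: "\<And>m. m < n \<Longrightarrow> pdp F x p m = c * mtrace (B * diag_unit_mat n m)"
    and dx: "\<And>m. m < n \<Longrightarrow> pdx F x p m = c * mtrace (B * Lmat_dx n x m)"
  shows "pbracket n F (\<lambda>x p. calE n lam x p - calG n lam x p) x p = 0"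
proof -
  define S where "S = shiftL n lam x p"
  define A where "A = adj_mat S"
  define J where "J = offdiag_ones n"
  define X where "X = Xmat n x"
  define M where "M = lax_mat n x B"
  have Sc: "S \<in> carrier_mat n n" and Ac: "A \<in> carrier_mat n n" and Jc: "J \<in> carrier_mat n n"
    and Xc: "X \<in> carrier_mat n n" and Mc: "M \<in> carrier_mat n n"
    using adj_mat(1)[OF shiftL_carrier] by (simp_all add: S_def A_def J_def X_def M_def)
  have "mtrace (diag_part n B * (A * J)) + mtrace (X * ((M * A - A * M) * J)) = 0"
  proof (rule mtrace_bracket_identity[OF Ac B Mc Sc Xc Jc])
    show "diag_part n B = M * X - X * M + B"
      using lax_mat_commutator_Xmat[OF inj B] by (simp add: M_def X_def)
    show "J * M = M * J"
      using offdiag_ones_commute_lax_mat[OF inj B BS] by (simp add: J_def M_def)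
    show "J = S * X - X * S"
      using shiftL_commutator_Xmat[OF inj] by (simp add: J_def S_def X_def)
    have "A * S = S * A" using adj_mat(2,3)[OF Sc] by (simp add: A_def)
    then have "B * A * S = (B * S) * A" using B Ac Sc by simp
    also have "\<dots> = S * (B * A)" using B Ac Sc BS[folded S_def] by simp
    finally show "B * A * S = S * (B * A)" .
  qed
  then show ?thesis
    using pbracket_EG_eq[OF inj B BS dp dx] adj_deriv_commutator[OF Sc Mc]
    by (simp add: S_def A_def J_def X_def M_def)
qed

lemma shiftL_commute_Lmat: "shiftL n lam x p * Lmat n x p = Lmat n x p * shiftL n lam x p"
  unfolding shiftL_def
  by (simp add: minus_mult_distrib_mat[of _ n n _ _ n] mult_minus_distrib_mat[of _ n n _ n]
      mult_smult_assoc_mat[of _ n n _ n] mult_smult_distrib[of _ n n _ n]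
      left_mult_one_mat[OF Lmat_carrier] right_mult_one_mat[OF Lmat_carrier])

theorem mainTheorem8:
  fixes n k :: nat and lam :: real and x p :: "nat \<Rightarrow> real"
  assumes "n \<ge> 1" and "k \<ge> 1" and "inj_on x {..<n}"
  shows "pbracket n (\<lambda>x p. mtrace ((shiftL n lam x p) ^\<^sub>m k))
                     (\<lambda>x p. calE n lam x p - calG n lam x p) x p = 0 \<and>
         pbracket n (Ik n k) (\<lambda>x p. calE n lam x p - calG n lam x p) x p = 0"
proof
  have "shiftL n lam x p ^\<^sub>m (k - 1) * shiftL n lam x p = shiftL n lam x p * shiftL n lam x p ^\<^sub>m (k - 1)"
    using pow_mat_commute[OF shiftL_carrier shiftL_carrier refl] by simp
  then show "pbracket n (\<lambda>x p. mtrace ((shiftL n lam x p) ^\<^sub>m k))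
      (\<lambda>x p. calE n lam x p - calG n lam x p) x p = 0"
    using pdp_mtrace_shiftL_pow pdx_mtrace_shiftL_pow[OF assms(3)]
    by (intro pbracket_EG_eq_zero[OF assms(3), where B = "shiftL n lam x p ^\<^sub>m (k - 1)" and c = "- real k"]) auto
  have "Lmat n x p ^\<^sub>m (k - 1) * shiftL n lam x p = shiftL n lam x p * Lmat n x p ^\<^sub>m (k - 1)"
    using pow_mat_commute[OF Lmat_carrier shiftL_carrier shiftL_commute_Lmat] by simp
  then show "pbracket n (Ik n k) (\<lambda>x p. calE n lam x p - calG n lam x p) x p = 0"
    using pdp_Ik[OF assms(2)] pdx_Ik[OF assms(3) _ assms(2)]
    by (intro pbracket_EG_eq_zero[OF assms(3), where B = "Lmat n x p ^\<^sub>m (k - 1)" and c = 1]) auto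
qed

end
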